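(* Let $\mu=(\mu_1,\dots,\mu_r)$ be a partition with $\mu_1\ge\cdots\ge\mu_r>0$. Then $\mu$ is both $2$-regular and a $4$-core if and only if exactly one of the following holds: (i) $\mu_r=1$ and there exists $0\le s\le r-1$ such that $\mu_i-\mu_{i+1}=3$ for all $1\le i\le s$ and $\mu_i-\mu_{i+1}=1$ for all $s+1\le i\le r-1$; (ii) $\mu_r\in\{2,3\}$ and $\mu_i-\mu_{i+1}=3$ for all $1\le i\le r-1$.
   Context: A partition is $2$-regular if no two nonzero parts are equal. A partition is a $4$-core if no hook length of its Young diagram is divisible by $4$. *)

theory Defs
  imports Main
begin

text \<open>Cells of the Young diagram are pairs (i,j) with i < r and j < mu!i (0-indexed).\<close>

definition is_partition :: "nat list \<Rightarrow> bool" where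
  "is_partition mu \<longleftrightarrow> sorted_wrt (\<ge>) mu \<and> (\<forall>x\<in>set mu. 0 < x)"

definition cells :: "nat list \<Rightarrow> (nat \<times> nat) set" where
  "cells mu = {(i, j). i < length mu \<and> j < mu ! i}"

text \<open>hook length = arm + leg + 1\<close>
definition hook_length :: "nat list \<Rightarrow> nat \<Rightarrow> nat \<Rightarrow> nat" where
  "hook_length mu i j =
     (mu ! i - j - 1) + card {k. i < k \<and> k < length mu \<and> j < mu ! k} + 1"

definition two_regular :: "nat list \<Rightarrow> bool" where
  "two_regular mu \<longleftrightarrow> (\<forall>a < length mu. \<forall>b < length mu. a \<noteq> b \<longrightarrow> mu ! a \<noteq> mu ! b)"

definition is_core :: "nat \<Rightarrow> nat list \<Rightarrow> bool" where
  "is_core t mu \<longleftrightarrow> (\<forall>(i, j) \<in> cells mu. \<not> t dvd hook_length mu i j)"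

end

theory Submission imports Defs begin

(* Write mu = a # b # w and remove the first row.  The hooks of
   the lower rows are those of b # w; the first row has the hooks a - j for the
   cells b <= j < a that stick out beyond row two, and (a - b) + 1 + h above
   every first-row hook h of b # w.  So mu is a 2-regular 4-core iff b # w is
   one, 0 < a - b < 4, and no first-row hook of b # w is congruent to
   3 - (a - b) modulo 4.  The last cell of the first row of b # w has hook 1,
   which rules out a - b = 2.  For a - b = 1 every shape (i) or (ii) other
   than the staircase k, k - 1, ..., 1 has a first-row hook 2, whereas all
   first-row hooks of the staircase are odd; for a - b = 3 the condition is
   the core property of b # w itself.  Hence the admissible
   top gaps are 3, or 1 over a staircase, and induction on the number of rows
   yields exactly the shapes (i) and (ii). *)

section \<open>Partitions and hook lengths of the first row\<close>

lemma is_partition_Cons: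
  "is_partition (a # v) \<longleftrightarrow> 0 < a \<and> (\<forall>x\<in>set v. x \<le> a) \<and> is_partition v"
  unfolding is_partition_def by auto

lemma two_regular_iff_distinct: "two_regular mu \<longleftrightarrow> distinct mu"
  unfolding two_regular_def distinct_conv_nth by blast

lemma hook_length_Cons_Suc: "hook_length (a # v) (Suc i) j = hook_length v i j"
proof -
  have "{k. Suc i < k \<and> k < length (a # v) \<and> j < (a # v) ! k}
        = Suc ` {k. i < k \<and> k < length v \<and> j < v ! k}"
    by (auto simp: image_iff gr0_conv_Suc) (metis Suc_lessE Suc_less_SucD nth_Cons_Suc)
  then show ?thesis unfolding hook_length_def by (simp add: card_image)
qed

lemma hook_length_Cons_0:
  "hook_length (a # v) 0 j = a - j - 1 + card {k. k < length v \<and> j < v ! k} + 1"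
proof -
  have "{k. 0 < k \<and> k < length (a # v) \<and> j < (a # v) ! k} = Suc ` {k. k < length v \<and> j < v ! k}"
    by (auto simp: image_iff gr0_conv_Suc)
  then show ?thesis unfolding hook_length_def by (simp add: card_image)
qed

lemma hook_length_overhang:
  assumes "\<forall>x\<in>set v. x \<le> j" and "j < a"
  shows "hook_length (a # v) 0 j = a - j"
proof -
  have "v ! k \<le> j" if "k < length v" for k
    using assms(1) nth_mem[OF that] by blast
  then have no_cells_below: "{k. k < length v \<and> j < v ! k} = {}"
    by (blast dest: leD)
  show ?thesis using assms(2) unfolding hook_length_Cons_0 no_cells_below by simp
qed

lemma hook_length_beyond_second_row:
  assumes "\<forall>x\<in>set w. x \<le> b" and "b \<le> j" and "j < a"
  shows "hook_length (a # b # w) 0 j = a - j"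
proof (rule hook_length_overhang)
  show "\<forall>x\<in>set (b # w). x \<le> j"
  proof
    fix x assume "x \<in> set (b # w)"
    then have "x \<le> b" using assms(1) by auto
    then show "x \<le> j" using assms(2) by simp
  qed
qed (fact assms(3))

lemma hook_length_above_second_row:
  assumes "b \<le> a" and "j < b"
  shows "hook_length (a # b # w) 0 j = (a - b) + 1 + hook_length (b # w) 0 j"
proof -
  have rows: "{k. k < length (b # w) \<and> j < (b # w) ! k} = insert 0 (Suc ` {k. k < length w \<and> j < w ! k})"
    using assms(2) by (auto simp: image_iff gr0_conv_Suc) (metis less_Suc_eq_0_disj nth_Cons_Suc)
  have "finite {k. k < length w \<and> j < w ! k}" by simp
  then show ?thesis
    using assms unfolding hook_length_Cons_0 rows by (simp add: card_image)
qed

lemma hook_length_last_cell: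
  assumes "\<forall>x\<in>set w. x < b" and "0 < b"
  shows "hook_length (b # w) 0 (b - 1) = 1"
proof -
  have "\<forall>x\<in>set w. x \<le> b - 1" using assms(1) by auto
  then show ?thesis using hook_length_overhang[of w "b - 1" b] assms(2) by simp
qed

lemma cells_Cons:
  "cells (a # v) = {0} \<times> {..<a} \<union> (\<lambda>(i, j). (Suc i, j)) ` cells v"
proof (rule set_eqI)
  fix x :: "nat \<times> nat"
  obtain i j where x: "x = (i, j)" by fastforce
  show "x \<in> cells (a # v) \<longleftrightarrow> x \<in> {0} \<times> {..<a} \<union> (\<lambda>(i, j). (Suc i, j)) ` cells v"
    unfolding x by (cases i) (auto simp: cells_def image_iff)
qed

lemma is_core_Cons:
  "is_core t (a # v) \<longleftrightarrow> (\<forall>j<a. \<not> t dvd hook_length (a # v) 0 j) \<and> is_core t v"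
  unfolding is_core_def cells_Cons by (auto simp: hook_length_Cons_Suc ball_Un)

lemma is_core_Nil: "is_core t []"
  by (simp add: is_core_def cells_def)

text \<open>The overhanging cells of the first row are hook lengths 1, ..., a - b; they avoid
  multiples of 4 exactly when the overhang is shorter than 4.\<close>
lemma overhang_free_of_4:
  fixes a b :: nat
  shows "(\<forall>j. b \<le> j \<and> j < a \<longrightarrow> \<not> 4 dvd (a - j)) \<longleftrightarrow> a - b < 4"
proof
  assume free: "\<forall>j. b \<le> j \<and> j < a \<longrightarrow> \<not> 4 dvd (a - j)"
  show "a - b < 4"
  proof (rule ccontr)
    assume "\<not> a - b < 4"
    then have "b \<le> a - 4" "a - 4 < a" "a - (a - 4) = 4" by auto
    then show False using free[rule_format, of "a - 4"] by simp
  qed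
next
  assume "a - b < 4"
  show "\<forall>j. b \<le> j \<and> j < a \<longrightarrow> \<not> 4 dvd (a - j)"
  proof (intro allI impI)
    fix j assume "b \<le> j \<and> j < a"
    then have "0 < a - j" "a - j < 4" using \<open>a - b < 4\<close> by auto
    then show "\<not> 4 dvd (a - j)" using nat_dvd_not_less by blast
  qed
qed

section \<open>The two shapes\<close>

definition constant_gaps :: "nat \<Rightarrow> nat list \<Rightarrow> nat \<Rightarrow> nat \<Rightarrow> bool" where
  "constant_gaps c mu lo hi \<longleftrightarrow> (\<forall>i. lo \<le> i \<and> i < hi \<longrightarrow> mu ! i = mu ! Suc i + c)"

lemma constant_gaps_empty: "constant_gaps c mu lo lo"
  by (simp add: constant_gaps_def)

lemma constant_gaps_Cons_shift:
  "constant_gaps c (a # v) (Suc lo) (Suc hi) \<longleftrightarrow> constant_gaps c v lo hi"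
  unfolding constant_gaps_def
proof (intro iffI allI impI)
  fix i assume "\<forall>i. Suc lo \<le> i \<and> i < Suc hi \<longrightarrow> (a # v) ! i = (a # v) ! Suc i + c"
    and "lo \<le> i \<and> i < hi"
  then show "v ! i = v ! Suc i + c" by auto
next
  fix i assume gaps: "\<forall>i. lo \<le> i \<and> i < hi \<longrightarrow> v ! i = v ! Suc i + c"
    and i: "Suc lo \<le> i \<and> i < Suc hi"
  then obtain k where "i = Suc k" by (cases i) auto
  then show "(a # v) ! i = (a # v) ! Suc i + c" using gaps i by simp
qed

lemma constant_gaps_Cons_0:
  "constant_gaps c (a # b # w) 0 (Suc hi) \<longleftrightarrow> a = b + c \<and> constant_gaps c (b # w) 0 hi"
  by (simp add: constant_gaps_def All_less_Suc2)

definition staircase :: "nat list \<Rightarrow> bool" where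
  "staircase mu \<longleftrightarrow> last mu = 1 \<and> constant_gaps 1 mu 0 (length mu - 1)"

definition shape_one :: "nat list \<Rightarrow> bool" where
  "shape_one mu \<longleftrightarrow> last mu = 1 \<and>
     (\<exists>s < length mu. constant_gaps 3 mu 0 s \<and> constant_gaps 1 mu s (length mu - 1))"

definition shape_two :: "nat list \<Rightarrow> bool" where
  "shape_two mu \<longleftrightarrow> last mu \<in> {2, 3} \<and> constant_gaps 3 mu 0 (length mu - 1)"

lemma shapes_single:
  "staircase [a] \<longleftrightarrow> a = 1" "shape_one [a] \<longleftrightarrow> a = 1" "shape_two [a] \<longleftrightarrow> a \<in> {2, 3}"
  by (auto simp: staircase_def shape_one_def shape_two_def constant_gaps_empty)

lemma staircase_Cons: "staircase (a # b # w) \<longleftrightarrow> a = b + 1 \<and> staircase (b # w)"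
  by (auto simp: staircase_def constant_gaps_Cons_0)

lemma shape_two_Cons: "shape_two (a # b # w) \<longleftrightarrow> a = b + 3 \<and> shape_two (b # w)"
  by (auto simp: shape_two_def constant_gaps_Cons_0)

lemma shape_one_Cons:
  "shape_one (a # b # w) \<longleftrightarrow> (a = b + 1 \<and> staircase (b # w)) \<or> (a = b + 3 \<and> shape_one (b # w))"
proof -
  let ?split = "\<lambda>mu s. constant_gaps 3 mu 0 s \<and> constant_gaps 1 mu s (length mu - 1)"
  have "(\<exists>s < length (a # b # w). ?split (a # b # w) s) \<longleftrightarrow>
        ?split (a # b # w) 0 \<or> (\<exists>s < length (b # w). ?split (a # b # w) (Suc s))"
    by (simp add: Ex_less_Suc2)
  moreover have "?split (a # b # w) 0 \<longleftrightarrow> a = b + 1 \<and> constant_gaps 1 (b # w) 0 (length w)"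
    by (simp add: constant_gaps_empty constant_gaps_Cons_0)
  moreover have "?split (a # b # w) (Suc s) \<longleftrightarrow> a = b + 3 \<and> ?split (b # w) s" for s
    by (simp add: constant_gaps_Cons_0 constant_gaps_Cons_shift)
  ultimately show ?thesis
    unfolding shape_one_def staircase_def by auto
qed

lemma staircase_shape_one: "mu \<noteq> [] \<Longrightarrow> staircase mu \<Longrightarrow> shape_one mu"
  unfolding staircase_def shape_one_def by (auto intro: exI[of _ 0] simp: constant_gaps_empty)

section \<open>First-row hooks of the shapes\<close>

lemma staircase_first_row_hooks_odd:
  assumes "is_partition (a # v)" and "staircase (a # v)" and "j < a"
  shows "odd (hook_length (a # v) 0 j)"
  using assms
proof (induction v arbitrary: a j)
  case Nil
  then show ?case using hook_length_overhang[of "[]" j a] by (simp add: shapes_single)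
next
  case (Cons b w)
  have part: "is_partition (b # w)" and below: "\<forall>x\<in>set w. x \<le> b"
    using Cons.prems(1) unfolding is_partition_Cons by auto
  have a: "a = b + 1" and stair: "staircase (b # w)"
    using Cons.prems(2) by (auto simp: staircase_Cons)
  show ?case
  proof (cases "b \<le> j")
    case True
    then have "j = b" using a Cons.prems(3) by simp
    then have "hook_length (a # b # w) 0 j = 1"
      using hook_length_beyond_second_row[of w b j a] below a by simp
    then show ?thesis by simp
  next
    case False
    then have "hook_length (a # b # w) 0 j = 2 + hook_length (b # w) 0 j"
      using hook_length_above_second_row[of b a j w] a by simp
    then show ?thesis using Cons.IH[OF part stair] False by simp
  qed
qed

lemma shape_first_row_hook_two:
  assumes "is_partition (b # w)" and "shape_one (b # w) \<or> shape_two (b # w)"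
    and "\<not> staircase (b # w)"
  shows "\<exists>j<b. hook_length (b # w) 0 j = 2"
proof (cases w)
  case Nil
  then have "b = 2 \<or> b = 3" using assms(2,3) by (auto simp: shapes_single)
  then show ?thesis
    using hook_length_overhang[of "[]" "b - 2" b] Nil by (intro exI[of _ "b - 2"]) auto
next
  case (Cons c r)
  then have b: "b = c + 3" using assms(2,3) by (auto simp: shape_one_Cons shape_two_Cons staircase_Cons)
  have "\<forall>x\<in>set r. x \<le> c" using assms(1) unfolding Cons is_partition_Cons by auto
  then show ?thesis
    using hook_length_beyond_second_row[of r c "c + 1" b] b Cons by (intro exI[of _ "c + 1"]) auto
qed

section \<open>Adding a row on top\<close>

lemma top_gap_necessary:
  assumes part: "is_partition (a # b # w)" and strict: "\<forall>x\<in>set w. x < b" "b < a"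
    and row: "\<forall>j<a. \<not> 4 dvd hook_length (a # b # w) 0 j"
    and below: "shape_one (b # w) \<or> shape_two (b # w)"
  shows "(a = b + 1 \<and> staircase (b # w)) \<or> a = b + 3"
proof -
  have sorted: "b \<le> a" "\<forall>x\<in>set w. x \<le> b" "0 < b"
    using part unfolding is_partition_Cons by auto
  have inner: "hook_length (a # b # w) 0 j = (a - b) + 1 + hook_length (b # w) 0 j" if "j < b" for j
    using hook_length_above_second_row[OF sorted(1) that] .
  have "\<forall>j. b \<le> j \<and> j < a \<longrightarrow> \<not> 4 dvd (a - j)"
    using row hook_length_beyond_second_row[of w b _ a] sorted(2) by fastforce
  then have short: "a - b < 4" by (simp add: overhang_free_of_4)
  have not_two: "a - b \<noteq> 2"
  proof
    assume "a - b = 2"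
    then have "hook_length (a # b # w) 0 (b - 1) = 4"
      using inner[of "b - 1"] hook_length_last_cell[OF strict(1) sorted(3)] sorted(3) by simp
    then show False using row strict(2) by (metis dvd_refl less_imp_diff_less)
  qed
  have stair: "staircase (b # w)" if "a - b = 1"
  proof (rule ccontr)
    assume "\<not> staircase (b # w)"
    then obtain j where "j < b" and "hook_length (b # w) 0 j = 2"
      using shape_first_row_hook_two[OF _ below] part by (auto simp: is_partition_Cons)
    then have "j < a" and "hook_length (a # b # w) 0 j = 4"
      using inner[of j] that strict(2) by simp_all
    then show False using row by (metis dvd_refl)
  qed
  have "a - b = 1 \<or> a - b = 3" using short not_two strict(2) by arith
  then show ?thesis using stair strict(2) by auto
qed

lemma top_gap_sufficient:
  assumes part: "is_partition (a # b # w)"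
    and gap: "(a = b + 1 \<and> staircase (b # w)) \<or> (a = b + 3 \<and> is_core 4 (b # w))"
  shows "\<forall>j<a. \<not> 4 dvd hook_length (a # b # w) 0 j"
proof (intro allI impI)
  fix j assume "j < a"
  have sorted: "b \<le> a" "\<forall>x\<in>set w. x \<le> b" and part_below: "is_partition (b # w)"
    using part unfolding is_partition_Cons by auto
  show "\<not> 4 dvd hook_length (a # b # w) 0 j"
  proof (cases "b \<le> j")
    case True
    then have "hook_length (a # b # w) 0 j = a - j"
      using hook_length_beyond_second_row[of w b j a] sorted(2) \<open>j < a\<close> by simp
    moreover have "\<forall>j. b \<le> j \<and> j < a \<longrightarrow> \<not> 4 dvd (a - j)"
      using gap overhang_free_of_4[of b a] by auto
    ultimately show ?thesis using True \<open>j < a\<close> by simp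
  next
    case False
    then have inner: "hook_length (a # b # w) 0 j = (a - b) + 1 + hook_length (b # w) 0 j"
      using hook_length_above_second_row[OF sorted(1)] by simp
    show ?thesis
    proof (cases "a = b + 1")
      case True
      then have "odd (hook_length (b # w) 0 j)"
        using gap staircase_first_row_hooks_odd[OF part_below] False by simp
      then have "odd (hook_length (a # b # w) 0 j)" using inner True by simp
      then show ?thesis using dvd_trans[of 2 4] by auto
    next
      case False
      then have "a = b + 3" "\<not> 4 dvd hook_length (b # w) 0 j"
        using gap \<open>\<not> b \<le> j\<close> by (auto simp: is_core_Cons)
      then show ?thesis using inner by simp
    qed
  qed
qed

lemma distinct_4_core_iff_shape:
  assumes "is_partition (a # v)"
  shows "distinct (a # v) \<and> is_core 4 (a # v) \<longleftrightarrow> shape_one (a # v) \<or> shape_two (a # v)"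
  using assms
proof (induction v arbitrary: a)
  case Nil
  have "is_core 4 [a] \<longleftrightarrow> a < 4"
    using hook_length_overhang[of "[]" _ a] overhang_free_of_4[of 0 a]
    by (simp add: is_core_Cons is_core_Nil)
  then show ?case using Nil by (auto simp: is_partition_Cons shapes_single)
next
  case (Cons b w)
  have part: "is_partition (b # w)" and sorted: "\<forall>x\<in>set (b # w). x \<le> a" "\<forall>x\<in>set w. x \<le> b"
    using Cons.prems unfolding is_partition_Cons by auto
  have distinct: "distinct (a # b # w) \<longleftrightarrow> distinct (b # w) \<and> b < a"
    using sorted by (auto simp: le_neq_implies_less)
  show ?case
  proof
    assume core: "distinct (a # b # w) \<and> is_core 4 (a # b # w)"
    then have "shape_one (b # w) \<or> shape_two (b # w)" "b < a"
      using Cons.IH[OF part] distinct by (auto simp: is_core_Cons)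
    moreover have "\<forall>x\<in>set w. x < b"
      using sorted(2) core by (auto simp: order_le_less)
    ultimately have "(a = b + 1 \<and> staircase (b # w)) \<or> a = b + 3"
      using top_gap_necessary Cons.prems core by (simp add: is_core_Cons)
    then show "shape_one (a # b # w) \<or> shape_two (a # b # w)"
      using \<open>shape_one (b # w) \<or> shape_two (b # w)\<close> by (auto simp: shape_one_Cons shape_two_Cons)
  next
    assume "shape_one (a # b # w) \<or> shape_two (a # b # w)"
    then have gap: "(a = b + 1 \<and> staircase (b # w)) \<or> (a = b + 3 \<and> (shape_one (b # w) \<or> shape_two (b # w)))"
      by (auto simp: shape_one_Cons shape_two_Cons)
    then have "distinct (b # w) \<and> is_core 4 (b # w)"
      using Cons.IH[OF part] staircase_shape_one by blast
    then show "distinct (a # b # w) \<and> is_core 4 (a # b # w)"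
      using top_gap_sufficient[OF Cons.prems] gap distinct by (auto simp: is_core_Cons)
  qed
qed

text \<open>The two shapes differ in their last part.\<close>
lemma shapes_exclusive: "\<not> (shape_one mu \<and> shape_two mu)"
  by (simp add: shape_one_def shape_two_def)

lemma one_based_gaps:
  "(\<forall>i. lo + 1 \<le> i \<and> i \<le> hi \<longrightarrow> int (mu ! (i - 1)) - int (mu ! i) = int c)
   \<longleftrightarrow> constant_gaps c mu lo hi"
  unfolding constant_gaps_def
proof (intro iffI allI impI)
  fix i assume "\<forall>i. lo + 1 \<le> i \<and> i \<le> hi \<longrightarrow> int (mu ! (i - 1)) - int (mu ! i) = int c"
    and "lo \<le> i \<and> i < hi"
  then show "mu ! i = mu ! Suc i + c" using spec[of _ "Suc i"] by force
next
  fix i assume gaps: "\<forall>i. lo \<le> i \<and> i < hi \<longrightarrow> mu ! i = mu ! Suc i + c"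
    and i: "lo + 1 \<le> i \<and> i \<le> hi"
  then obtain k where "i = Suc k" by (cases i) auto
  then show "int (mu ! (i - 1)) - int (mu ! i) = int c" using gaps i by simp
qed

theorem lemma4p2:
  fixes mu :: "nat list" and r :: nat
  assumes "is_partition mu" and "r = length mu" and "r \<ge> 1"
  defines "P \<equiv> (\<lambda>i. mu ! (i - 1))"
  shows "(two_regular mu \<and> is_core 4 mu) \<longleftrightarrow>
    (let C1 = (P r = 1 \<and> (\<exists>s. s \<le> r - 1 \<and>
                 (\<forall>i. 1 \<le> i \<and> i \<le> s \<longrightarrow> int (P i) - int (P (i + 1)) = 3) \<and>
                 (\<forall>i. s + 1 \<le> i \<and> i \<le> r - 1 \<longrightarrow> int (P i) - int (P (i + 1)) = 1)));
         C2 = (P r \<in> {2, 3} \<and>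
                 (\<forall>i. 1 \<le> i \<and> i \<le> r - 1 \<longrightarrow> int (P i) - int (P (i + 1)) = 3))
     in (C1 \<and> \<not> C2) \<or> (\<not> C1 \<and> C2))"
proof -
  obtain a v where mu: "mu = a # v" using assms(2,3) by (cases mu) auto
  have last: "P r = last mu" unfolding P_def assms(2) using mu by (simp add: last_conv_nth)
  have gaps: "(\<forall>i. lo + 1 \<le> i \<and> i \<le> hi \<longrightarrow> int (P i) - int (P (i + 1)) = int c)
              \<longleftrightarrow> constant_gaps c mu lo hi" for lo hi c
    unfolding P_def using one_based_gaps[of lo hi mu c] by simp
  have gaps_3: "(\<forall>i. 1 \<le> i \<and> i \<le> hi \<longrightarrow> int (P i) - int (P (i + 1)) = 3)
                \<longleftrightarrow> constant_gaps 3 mu 0 hi" for hi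
    using gaps[of 0 hi 3] by simp
  have gaps_1: "(\<forall>i. s + 1 \<le> i \<and> i \<le> hi \<longrightarrow> int (P i) - int (P (i + 1)) = 1)
                \<longleftrightarrow> constant_gaps 1 mu s hi" for s hi
    using gaps[of s hi 1] by simp
  have split_point: "s \<le> r - 1 \<longleftrightarrow> s < length mu" for s using assms(2,3) by auto
  have shapes:
    "(P r = 1 \<and> (\<exists>s. s \<le> r - 1 \<and>
        (\<forall>i. 1 \<le> i \<and> i \<le> s \<longrightarrow> int (P i) - int (P (i + 1)) = 3) \<and>
        (\<forall>i. s + 1 \<le> i \<and> i \<le> r - 1 \<longrightarrow> int (P i) - int (P (i + 1)) = 1))) \<longleftrightarrow> shape_one mu"
    "(P r \<in> {2, 3} \<and> (\<forall>i. 1 \<le> i \<and> i \<le> r - 1 \<longrightarrow> int (P i) - int (P (i + 1)) = 3))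
       \<longleftrightarrow> shape_two mu"
    unfolding gaps_3 gaps_1 last shape_one_def shape_two_def unfolding split_point
    by (simp_all add: assms(2))
  have "two_regular mu \<and> is_core 4 mu \<longleftrightarrow> shape_one mu \<or> shape_two mu"
    using distinct_4_core_iff_shape assms(1) mu by (simp add: two_regular_iff_distinct)
  then show ?thesis unfolding Let_def shapes using shapes_exclusive by blast
qed

end
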